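(* Let $P$ be a finite set of points in $\mathbb{R}^m$, let $(A,B)$ be an optimal 2-means partition of $P$, let $S\subseteq A$ be the set of low-revenue points of $A$, assume $S\neq\emptyset$, and let $x\in\arg\max_{u\in S}d(u,\rho(A))$. Then $d(\rho(S),\rho(A))\ge\frac79 d(x,\rho(A))$.
   Context: Distances are Euclidean: $d(x,y)=\|x-y\|_2$. For finite nonempty $S$, $\rho(S)=\frac{1}{|S|}\sum_{u\in S}u$ and $\Delta_1(S)=\sum_{u\in S}d(u,\rho(S))^2$. A partition $(A,B)$ of $P$ into two nonempty sets is an optimal 2-means partition if it minimizes $\Delta_1(A)+\Delta_1(B)$ among all partitions of $P$ into two nonempty sets. For $i\in A$, $j\in B$, $rev(i,j)=\min\{d(i,j)/\max\{d(i,\rho(A)),d(j,\rho(B))\},\,1\}$ (equal to $1$ if the maximum is $0$). For $u\in A$, $HR_B(u)=\{v\in B: rev(u,v)\ge\frac{1}{10}\}$. A point $u\in A$ is a high-revenue point if $|HR_B(u)|\ge\frac12|B|$, and a low-revenue point otherwise. *)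

theory Defs
  imports "HOL-Analysis.Analysis"
begin

definition centroid :: "'a::euclidean_space set \<Rightarrow> 'a" where
  "centroid S = (1 / real (card S)) *\<^sub>R (\<Sum>u\<in>S. u)"

definition cost1 :: "'a::euclidean_space set \<Rightarrow> real" where
  "cost1 S = (\<Sum>u\<in>S. (dist u (centroid S))\<^sup>2)"

definition two_partition :: "'a set \<Rightarrow> 'a set \<Rightarrow> 'a set \<Rightarrow> bool" where
  "two_partition P A B \<longleftrightarrow> A \<union> B = P \<and> A \<inter> B = {} \<and> A \<noteq> {} \<and> B \<noteq> {}"

definition opt_2means :: "'a::euclidean_space set \<Rightarrow> 'a set \<Rightarrow> 'a set \<Rightarrow> bool" where
  "opt_2means P A B \<longleftrightarrow> two_partition P A B \<and>
     (\<forall>A' B'. two_partition P A' B' \<longrightarrow> cost1 A + cost1 B \<le> cost1 A' + cost1 B')"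

definition revenue :: "'a::euclidean_space set \<Rightarrow> 'a set \<Rightarrow> 'a \<Rightarrow> 'a \<Rightarrow> real" where
  "revenue A B i j =
     (let M = max (dist i (centroid A)) (dist j (centroid B))
      in if M = 0 then 1 else min (dist i j / M) 1)"

definition HR :: "'a::euclidean_space set \<Rightarrow> 'a set \<Rightarrow> 'a \<Rightarrow> 'a set" where
  "HR A B u = {v \<in> B. revenue A B u v \<ge> 1 / 10}"

definition high_revenue :: "'a::euclidean_space set \<Rightarrow> 'a set \<Rightarrow> 'a \<Rightarrow> bool" where
  "high_revenue A B u \<longleftrightarrow> real (card (HR A B u)) \<ge> real (card B) / 2"

definition low_revenue_points :: "'a::euclidean_space set \<Rightarrow> 'a set \<Rightarrow> 'a set" where
  "low_revenue_points A B = {u \<in> A. \<not> high_revenue A B u}"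

end

theory Submission
  imports Defs
begin

text \<open>
  In an optimal 2-means partition every point v of B is at least as close to \<rho>(B) as to \<rho>(A),
  since otherwise moving v to A would lower the cost. Hence if rev(u,v) < 1/10 for some
  v \<in> B, then d(u,v) \<le> d(u,\<rho>(A))/9. Two low-revenue points u, x each have fewer than |B|/2
  high-revenue partners, so they share a low-revenue partner v, and
  d(u,x) \<le> d(u,v) + d(v,x) \<le> 2/9 d(x,\<rho>(A)) by maximality of x. The centroid of S is an
  average of points within 2/9 d(x,\<rho>(A)) of x, so it lies within that distance of x too,
  and the triangle inequality gives the claim.
\<close>

lemma centroid_diff:
  assumes "finite S" "S \<noteq> {}"
  shows "centroid S - c = (1 / real (card S)) *\<^sub>R (\<Sum>u\<in>S. u - c)"
proof -
  have "real (card S) > 0" using assms by (simp add: card_gt_0_iff)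
  moreover have "(\<Sum>u\<in>S. u - c) = (\<Sum>u\<in>S. u) - real (card S) *\<^sub>R c"
    by (simp add: sum_subtractf sum_constant_scaleR)
  ultimately show ?thesis by (simp add: centroid_def scaleR_diff_right)
qed

lemma sum_diff_centroid:
  assumes "finite S" "S \<noteq> {}"
  shows "(\<Sum>u\<in>S. u - centroid S) = 0"
  using centroid_diff[OF assms, of "centroid S"] assms by (simp add: card_gt_0_iff)

lemma dist_centroid_le:
  assumes "finite S" "S \<noteq> {}" and close: "\<And>u. u \<in> S \<Longrightarrow> dist u c \<le> r"
  shows "dist (centroid S) c \<le> r"
proof -
  have n: "real (card S) > 0" using assms by (simp add: card_gt_0_iff)
  have "dist (centroid S) c = norm (\<Sum>u\<in>S. u - c) / real (card S)"
    using centroid_diff[OF assms(1,2), of c] n by (simp add: dist_norm)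
  also have "\<dots> \<le> (\<Sum>u\<in>S. dist u c) / real (card S)"
    using n by (simp add: divide_right_mono dist_norm norm_sum)
  also have "\<dots> \<le> (\<Sum>u\<in>S. r) / real (card S)"
    using n by (intro divide_right_mono sum_mono close) auto
  also have "\<dots> = r" using n by simp
  finally show ?thesis .
qed

lemma power2_dist_expand:
  fixes u c r :: "'a::real_inner"
  shows "(dist u c)\<^sup>2 = (dist u r)\<^sup>2 + 2 * ((u - r) \<bullet> (r - c)) + (dist r c)\<^sup>2"
  using dot_norm[of "u - r" "r - c"] by (simp add: dist_norm)

lemma sum_dist_sq_eq_cost1:
  assumes "finite S" "S \<noteq> {}"
  shows "(\<Sum>u\<in>S. (dist u c)\<^sup>2) = cost1 S + real (card S) * (dist (centroid S) c)\<^sup>2"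
proof -
  let ?r = "centroid S"
  have "(\<Sum>u\<in>S. (dist u c)\<^sup>2)
      = (\<Sum>u\<in>S. (dist u ?r)\<^sup>2 + 2 * ((u - ?r) \<bullet> (?r - c)) + (dist ?r c)\<^sup>2)"
    by (intro sum.cong refl power2_dist_expand)
  also have "\<dots> = cost1 S + 2 * ((\<Sum>u\<in>S. u - ?r) \<bullet> (?r - c)) + real (card S) * (dist ?r c)\<^sup>2"
    by (simp add: sum.distrib cost1_def sum_distrib_left inner_sum_left)
  finally show ?thesis using sum_diff_centroid[OF assms] by simp
qed

lemma cost1_le_sum_dist_sq:
  assumes "finite S" "S \<noteq> {}"
  shows "cost1 S \<le> (\<Sum>u\<in>S. (dist u c)\<^sup>2)"
  using sum_dist_sq_eq_cost1[OF assms, of c] by simp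

lemma opt_2means_finite:
  assumes "finite P" "opt_2means P A B"
  shows "finite A" "finite B"
  using assms finite_subset by (auto simp: opt_2means_def two_partition_def)

lemma opt_2means_dist_centroid_le:
  assumes fin: "finite P" and opt: "opt_2means P A B" and v: "v \<in> B"
  shows "dist v (centroid B) \<le> dist v (centroid A)"
proof (cases "B - {v} = {}")
  case True
  then have "B = {v}" using v by auto
  then show ?thesis by (simp add: centroid_def)
next
  case False
  have fA: "finite A" and fB: "finite B" using opt_2means_finite[OF fin opt] .
  have tp: "two_partition P A B" using opt by (simp add: opt_2means_def)
  then have "v \<notin> A" using v by (auto simp: two_partition_def)
  have "two_partition P (insert v A) (B - {v})"
    using tp v False unfolding two_partition_def by auto
  then have "cost1 A + cost1 B \<le> cost1 (insert v A) + cost1 (B - {v})"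
    using opt by (simp add: opt_2means_def)
  also have "cost1 (insert v A) \<le> (\<Sum>u\<in>insert v A. (dist u (centroid A))\<^sup>2)"
    using fA by (intro cost1_le_sum_dist_sq) auto
  also have "\<dots> = (dist v (centroid A))\<^sup>2 + cost1 A"
    using fA \<open>v \<notin> A\<close> by (simp add: cost1_def)
  also have "cost1 (B - {v}) \<le> (\<Sum>u\<in>B - {v}. (dist u (centroid B))\<^sup>2)"
    using fB False by (intro cost1_le_sum_dist_sq) auto
  also have "\<dots> = cost1 B - (dist v (centroid B))\<^sup>2"
    using v fB by (simp add: cost1_def sum_diff1)
  finally have "(dist v (centroid B))\<^sup>2 \<le> (dist v (centroid A))\<^sup>2" by simp
  then show ?thesis by (simp add: power2_le_iff_abs_le)
qed

lemma revenue_less_imp_dist_less: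
  assumes "revenue A B u v < r" "r \<le> 1"
  shows "dist u v < r * max (dist u (centroid A)) (dist v (centroid B))"
proof -
  define M where "M = max (dist u (centroid A)) (dist v (centroid B))"
  have "M \<noteq> 0" using assms by (auto simp: revenue_def M_def)
  moreover have "M \<ge> 0" by (simp add: M_def le_max_iff_disj)
  ultimately have "M > 0" by linarith
  moreover have "dist u v / M < r"
    using assms \<open>M \<noteq> 0\<close> by (auto simp: revenue_def M_def[symmetric] min_def split: if_splits)
  ultimately show ?thesis by (simp add: M_def[symmetric] field_simps)
qed

lemma opt_2means_dist_low_revenue_partner:
  assumes fin: "finite P" and opt: "opt_2means P A B" and v: "v \<in> B" "v \<notin> HR A B u"
  shows "dist u v \<le> dist u (centroid A) / 9"
proof -
  have "dist u v < max (dist u (centroid A)) (dist v (centroid B)) / 10"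
    using revenue_less_imp_dist_less[of A B u v "1/10"] v by (simp add: HR_def)
  moreover have "max (dist u (centroid A)) (dist v (centroid B)) \<le> dist u v + dist u (centroid A)"
    using opt_2means_dist_centroid_le[OF fin opt v(1)] dist_triangle3[of v "centroid A" u]
    by (simp add: max_def)
  ultimately show ?thesis using zero_le_dist[of u v] by linarith
qed

lemma common_low_revenue_partner:
  assumes "finite B" "u \<in> low_revenue_points A B" "x \<in> low_revenue_points A B"
  obtains v where "v \<in> B" "v \<notin> HR A B u" "v \<notin> HR A B x"
proof -
  have "real (card (HR A B u \<union> HR A B x)) \<le> real (card (HR A B u)) + real (card (HR A B x))"
    using card_Un_le[of "HR A B u" "HR A B x"] by linarith
  also have "\<dots> < real (card B)"
    using assms(2,3) by (simp add: low_revenue_points_def high_revenue_def)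
  finally have "HR A B u \<union> HR A B x \<noteq> B" by auto
  moreover have "HR A B u \<union> HR A B x \<subseteq> B" by (auto simp: HR_def)
  ultimately show ?thesis using that by blast
qed

theorem mainTheorem6:
  fixes P A B :: "'a::euclidean_space set" and x :: 'a
  assumes "finite P"
    and "opt_2means P A B"
    and "low_revenue_points A B \<noteq> {}"
    and "x \<in> low_revenue_points A B"
    and "\<forall>u\<in>low_revenue_points A B. dist u (centroid A) \<le> dist x (centroid A)"
  shows "dist (centroid (low_revenue_points A B)) (centroid A) \<ge> 7 / 9 * dist x (centroid A)"
proof -
  define S where "S = low_revenue_points A B"
  define r where "r = dist x (centroid A)"
  have fA: "finite A" and fB: "finite B" using opt_2means_finite[OF assms(1,2)] .
  have "finite S" using fA finite_subset by (auto simp: S_def low_revenue_points_def)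
  have "S \<noteq> {}" using assms(3) by (simp add: S_def)
  have close: "dist u x \<le> 2 / 9 * r" if "u \<in> S" for u
  proof -
    have "u \<in> low_revenue_points A B" using that by (simp add: S_def)
    then obtain v where v: "v \<in> B" "v \<notin> HR A B u" "v \<notin> HR A B x"
      using common_low_revenue_partner[OF fB _ assms(4)] by blast
    have "dist u (centroid A) \<le> r" using assms(5) that by (simp add: S_def r_def)
    then show ?thesis
      using opt_2means_dist_low_revenue_partner[OF assms(1,2) v(1,2)]
        opt_2means_dist_low_revenue_partner[OF assms(1,2) v(1,3)]
        dist_triangle[of u x v] dist_commute[of x v] unfolding r_def by linarith
  qed
  have "dist (centroid S) x \<le> 2 / 9 * r"
    using dist_centroid_le[OF \<open>finite S\<close> \<open>S \<noteq> {}\<close> close] .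
  moreover have "r \<le> dist x (centroid S) + dist (centroid S) (centroid A)"
    unfolding r_def by (rule dist_triangle)
  ultimately show ?thesis
    using dist_commute[of x "centroid S"] unfolding S_def r_def by linarith
qed

end
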